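(* For $A\in\mathbb{R}$ and $x\in\mathbb{R}$ define $E_0(A,x):=1$, $E_1(A,x):=e^{(1-x)A}$ and, for $n\ge2$, \[ E_n(A,x):=\begin{cases} \exp\!\Big(\big[x(E_1+E_3+\cdots+E_{n-1})-\tfrac n2\big]A\Big), & n \text{ even},\\[4pt] \exp\!\Big(\big[\tfrac{n+1}{2}-x(E_0+E_2+\cdots+E_{n-1})\big]A\Big), & n\text{ odd},\end{cases} \] where all $E_j$ are evaluated at $(A,x)$. Define $\varphi_1(A,x):=x-1$ and $\varphi_n(A,x):=\varphi_{n-1}(A,x)-1+xE_{n-1}(A,x)$ for $n\ge2$, and $p_n(A):=\frac{\partial\varphi_n}{\partial x}(A,1)$. Then for every $n\ge1$, $p_n$ is a polynomial in $A$ with integer coefficients, i.e. $p_n\in\mathbb{Z}[A]$. *)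

theory Defs
  imports "HOL-Analysis.Analysis" "HOL-Computational_Algebra.Polynomial"
begin

fun E :: "nat \<Rightarrow> real \<Rightarrow> real \<Rightarrow> real" where
  "E n A x =
    (if n = 0 then 1
     else if n = 1 then exp ((1 - x) * A)
     else if even n then
       exp ((x * (\<Sum>j\<in>{j. j < n \<and> odd j}. E j A x) - real n / 2) * A)
     else
       exp ((real (n + 1) / 2 - x * (\<Sum>j\<in>{j. j < n \<and> even j}. E j A x)) * A))"

declare E.simps [simp del]

text \<open>phi 1 = x - 1, phi n = phi (n-1) - 1 + x E_{n-1} for n \<ge> 2 (phi 0 is an unused dummy).\<close>
fun phi :: "nat \<Rightarrow> real \<Rightarrow> real \<Rightarrow> real" where
  "phi 0 A x = 0"
| "phi (Suc 0) A x = x - 1"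
| "phi (Suc (Suc n)) A x = phi (Suc n) A x - 1 + x * E (Suc n) A x"

definition p :: "nat \<Rightarrow> real \<Rightarrow> real" where
  "p n A = deriv (\<lambda>x. phi n A x) 1"

end

(* Every E_n equals 1 at x = 1: the sum in its exponent then just counts its terms, and this
   count cancels the constant n/2 resp. (n+1)/2.  Hence the x-derivative of E_n at x = 1 is A
   times (that count plus the sum of the derivatives of the earlier E_j at 1), so by strong
   induction it is an integer polynomial in A.  Consequently
   p_n = 1 + sum_{k=1..n-1} (1 + dE_k/dx (A,1)) is one as well. *)

theory Submission
  imports Defs
begin

lemma map_poly_of_int_add:
  "map_poly (of_int :: int \<Rightarrow> 'a::comm_ring_1) (q + r) = map_poly of_int q + map_poly of_int r"
  by (rule poly_eqI) (simp add: coeff_map_poly)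

lemma map_poly_of_int_mult:
  "map_poly (of_int :: int \<Rightarrow> 'a::comm_ring_1) (q * r) = map_poly of_int q * map_poly of_int r"
  by (rule poly_eqI) (simp add: coeff_map_poly coeff_mult)

definition int_poly_fun :: "(real \<Rightarrow> real) \<Rightarrow> bool" where
  "int_poly_fun f \<longleftrightarrow> (\<exists>q :: int poly. \<forall>A. f A = poly (map_poly of_int q) A)"

lemma int_poly_fun_of_int: "int_poly_fun (\<lambda>_. of_int c)"
  unfolding int_poly_fun_def
  by (rule exI[of _ "[:c:]"]) (simp add: map_poly_pCons)

lemma int_poly_fun_of_nat: "int_poly_fun (\<lambda>_. of_nat k)"
  using int_poly_fun_of_int[of "int k"] by simp

lemma int_poly_fun_ident: "int_poly_fun (\<lambda>A. A)"
  unfolding int_poly_fun_def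
  by (rule exI[of _ "[:0, 1:]"]) (simp add: map_poly_pCons)

lemma int_poly_fun_add:
  assumes "int_poly_fun f" "int_poly_fun g"
  shows "int_poly_fun (\<lambda>A. f A + g A)"
proof -
  from assms obtain q r where "\<And>A. f A = poly (map_poly of_int q) A" "\<And>A. g A = poly (map_poly of_int r) A"
    unfolding int_poly_fun_def by blast
  then show ?thesis
    unfolding int_poly_fun_def by (intro exI[of _ "q + r"]) (simp add: map_poly_of_int_add)
qed

lemma int_poly_fun_mult:
  assumes "int_poly_fun f" "int_poly_fun g"
  shows "int_poly_fun (\<lambda>A. f A * g A)"
proof -
  from assms obtain q r where "\<And>A. f A = poly (map_poly of_int q) A" "\<And>A. g A = poly (map_poly of_int r) A"
    unfolding int_poly_fun_def by blast
  then show ?thesis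
    unfolding int_poly_fun_def by (intro exI[of _ "q * r"]) (simp add: map_poly_of_int_mult)
qed

lemma int_poly_fun_uminus: "int_poly_fun f \<Longrightarrow> int_poly_fun (\<lambda>A. - f A)"
  using int_poly_fun_mult[OF int_poly_fun_of_int[of "-1"]] by simp

lemma int_poly_fun_sum:
  "finite S \<Longrightarrow> (\<And>j. j \<in> S \<Longrightarrow> int_poly_fun (f j)) \<Longrightarrow> int_poly_fun (\<lambda>A. \<Sum>j\<in>S. f j A)"
proof (induction S rule: finite_induct)
  case empty
  then show ?case using int_poly_fun_of_int[of 0] by simp
next
  case (insert x F)
  then show ?case using int_poly_fun_add[of "f x" "\<lambda>A. \<Sum>j\<in>F. f j A"] by simp
qed

lemma card_odd_below: "card {j. j < n \<and> odd j} = n div 2"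
proof (induction n)
  case (Suc n)
  have "{j. j < Suc n \<and> odd j} = (if odd n then insert n {j. j < n \<and> odd j} else {j. j < n \<and> odd j})"
    by (auto simp: less_Suc_eq)
  with Suc show ?case by auto
qed simp

lemma card_even_below: "card {j. j < n \<and> even j} = (n + 1) div 2"
proof (induction n)
  case (Suc n)
  have "{j. j < Suc n \<and> even j} = (if even n then insert n {j. j < n \<and> even j} else {j. j < n \<and> even j})"
    by (auto simp: less_Suc_eq)
  with Suc show ?case by auto
qed simp

text \<open>The special cases \<open>E 0 = 1\<close> and \<open>E 1 = exp ((1 - x) A)\<close> are instances of the general formulas.\<close>

lemma E_even: "even n \<Longrightarrow> E n A x = exp ((x * (\<Sum>j\<in>{j. j < n \<and> odd j}. E j A x) - real n / 2) * A)"
  by (subst E.simps) auto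

lemma E_odd: "odd n \<Longrightarrow> E n A x = exp ((real (n + 1) / 2 - x * (\<Sum>j\<in>{j. j < n \<and> even j}. E j A x)) * A)"
proof (cases "n = 1")
  case True
  have "{j. j < 1 \<and> even j} = {0 :: nat}" by auto
  with True show ?thesis by (simp add: E.simps)
qed (subst E.simps, auto)

lemma E_at_one: "E n A 1 = 1"
proof (induction n rule: less_induct)
  case (less n)
  have sum_below: "(\<Sum>j\<in>{j. j < n \<and> P j}. E j A 1) = real (card {j. j < n \<and> P j})" for P
    using less by simp
  show ?case
  proof (cases "even n")
    case True
    then show ?thesis
      by (simp add: E_even sum_below card_odd_below real_of_nat_div)
  next
    case False
    then have "real ((n + 1) div 2) = real (n + 1) / 2"
      by (auto elim!: oddE)
    with False show ?thesis
      by (simp add: E_odd sum_below card_even_below)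
  qed
qed

lemma E_has_derivative_at_one:
  "\<exists>d. int_poly_fun d \<and> (\<forall>A. ((\<lambda>x. E n A x) has_real_derivative d A) (at 1))"
proof (induction n rule: less_induct)
  case (less n)
  then obtain D where D: "\<And>j. j < n \<Longrightarrow> int_poly_fun (D j)"
    "\<And>j A. j < n \<Longrightarrow> ((\<lambda>x. E j A x) has_real_derivative D j A) (at 1)"
    by metis
  define S where "S P = {j. j < n \<and> P j}" for P :: "nat \<Rightarrow> bool"
  have S_below: "j \<in> S P \<Longrightarrow> j < n" for j P
    by (simp add: S_def)
  have sum_poly: "int_poly_fun (\<lambda>A. \<Sum>j\<in>S P. D j A)" for P
    by (rule int_poly_fun_sum) (simp_all add: S_def D(1))
  have sum_at_one: "(\<Sum>j\<in>S P. E j A 1) = real (card (S P))" for P A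
    by (simp add: E_at_one)
  show ?case
  proof (cases "even n")
    case True
    have "((\<lambda>x. E n A x) has_real_derivative ((\<Sum>j\<in>S odd. D j A) + real (n div 2)) * A) (at 1)" for A
    proof -
      have "card (S odd) = n div 2" "real n / 2 = real (n div 2)"
        using True by (auto simp: S_def card_odd_below elim!: evenE)
      then show ?thesis
        unfolding E_even[OF True] S_def[symmetric]
        by (auto intro!: derivative_eq_intros D(2) dest: S_below simp: sum_at_one)
    qed
    moreover have "int_poly_fun (\<lambda>A. ((\<Sum>j\<in>S odd. D j A) + real (n div 2)) * A)"
      by (intro int_poly_fun_mult int_poly_fun_add sum_poly int_poly_fun_of_nat int_poly_fun_ident)
    ultimately show ?thesis by blast
  next
    case False
    have "((\<lambda>x. E n A x) has_real_derivative - ((\<Sum>j\<in>S even. D j A) + real ((n + 1) div 2)) * A) (at 1)" for A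
    proof -
      have "card (S even) = (n + 1) div 2" "real (n + 1) / 2 = real ((n + 1) div 2)"
        using False by (auto simp: S_def card_even_below elim!: oddE)
      then show ?thesis
        unfolding E_odd[OF False] S_def[symmetric]
        by (auto intro!: derivative_eq_intros D(2) dest: S_below simp: sum_at_one)
    qed
    moreover have "int_poly_fun (\<lambda>A. - ((\<Sum>j\<in>S even. D j A) + real ((n + 1) div 2)) * A)"
      by (intro int_poly_fun_mult int_poly_fun_uminus int_poly_fun_add sum_poly int_poly_fun_of_nat int_poly_fun_ident)
    ultimately show ?thesis by blast
  qed
qed

lemma phi_has_derivative_at_one:
  "\<exists>d. int_poly_fun d \<and> (\<forall>A. ((\<lambda>x. phi (Suc m) A x) has_real_derivative d A) (at 1))"
proof (induction m)
  case 0
  have "((\<lambda>x. phi (Suc 0) A x) has_real_derivative 1) (at 1)" for A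
    by (auto intro!: derivative_eq_intros)
  then show ?case using int_poly_fun_of_nat[of 1] by auto
next
  case (Suc m)
  then obtain d where d: "int_poly_fun d" "\<And>A. ((\<lambda>x. phi (Suc m) A x) has_real_derivative d A) (at 1)"
    by blast
  obtain D where D: "int_poly_fun D" "\<And>A. ((\<lambda>x. E (Suc m) A x) has_real_derivative D A) (at 1)"
    using E_has_derivative_at_one by blast
  have "((\<lambda>x. phi (Suc (Suc m)) A x) has_real_derivative d A + (1 + D A)) (at 1)" for A
    using d(2) D(2) by (auto intro!: derivative_eq_intros simp: E_at_one)
  moreover have "int_poly_fun (\<lambda>A. d A + (1 + D A))"
    by (intro int_poly_fun_add d(1) D(1) int_poly_fun_of_nat[of 1, simplified])
  ultimately show ?case by blast
qed

theorem lemma4p1: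
  fixes n :: nat
  assumes "n \<ge> 1"
  shows "\<exists>q :: int poly. \<forall>A. p n A = poly (map_poly of_int q) A"
proof -
  obtain m where "n = Suc m"
    using assms by (cases n) auto
  then obtain d where "int_poly_fun d" "\<And>A. ((\<lambda>x. phi n A x) has_real_derivative d A) (at 1)"
    using phi_has_derivative_at_one by blast
  moreover from this(2) have "p n = d"
    unfolding p_def by (simp add: DERIV_imp_deriv fun_eq_iff)
  ultimately have "int_poly_fun (p n)"
    by simp
  then show ?thesis
    unfolding int_poly_fun_def .
qed

end
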